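(* Consider an $[[n,k]]$ stabilizer code with Clifford encoder $U_E$, stabilizer group $\mathcal S$, set of syndrome representatives $T=\{E_s\}$ and correction operators $C_s=E_s$, and let $\{\sqrt{p_i}E_i\}$ be the Kraus operators of the $n$-qubit depolarizing channel. Let $s_i$ be the error syndrome of $E_i$ and \[ W_{l,i,s}=(I^{\otimes k}\otimes\langle l|)\,U_E^\dagger C_sP_s\sqrt{p_i}E_iU_E\,(I^{\otimes k}\otimes|0\rangle^{\otimes n-k}). \] Then \[ \frac{1}{2^{2k}}\sum_l\left|\mathrm{tr}(W_{l,i,s_i})\right|^2=\begin{cases}p_i,& E_i\in T\times\mathcal S,\\ 0,&\text{otherwise},\end{cases} \] where $T\times\mathcal S=\{hg: h\in T,\ g\in\mathcal S\}$ (operators compared up to phase).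
   Context: Pauli errors are tensor products of $I,X,Y,Z$ (phases ignored). $U_E$ is an $n$-qubit Clifford unitary; the code space is $\{U_E(|\psi\rangle\otimes|0\rangle^{\otimes n-k})\}$, stabilized by the abelian group $\mathcal S$ generated by $g_j=U_EZ_{j+k}U_E^\dagger$, $j=1,\dots,n-k$. The error syndrome of a Pauli $E$ is $s\in\{0,1\}^{n-k}$ with $s_j=0$ iff $E$ commutes with $g_j$. Syndrome projectors: $P_s=\prod_{j=1}^{n-k}\frac{I+(-1)^{s_j}g_j}{2}$. A set of syndrome representatives $T$ consists of one Pauli operator $E_s$ with syndrome $s$ for each $s\in\{0,1\}^{n-k}$, with $E_0=I$; the correction for outcome $s$ is $C_s=E_s$. The index $l$ runs over the computational basis of the $n-k$ ancilla qubits. The $n$-qubit depolarizing channel with rate $p$ has Kraus operators $\sqrt{p_i}E_i$, $E_i$ ranging over the $4^n$ Pauli operators, with $p_i=(1-\frac34p)^{n-w}(\frac p4)^w$ where $w$ is the weight (number of non-identity factors) of $E_i$. *)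

theory Defs
  imports "Jordan_Normal_Form.Schur_Decomposition"
begin

datatype pauli1 = PI | PX | PY | PZ

fun pauli1_entry :: "pauli1 \<Rightarrow> nat \<Rightarrow> nat \<Rightarrow> complex" where
  "pauli1_entry PI r c = (if r = c then 1 else 0)"
| "pauli1_entry PX r c = (if r \<noteq> c then 1 else 0)"
| "pauli1_entry PY r c = (if r = 0 \<and> c = 1 then - \<i> else if r = 1 \<and> c = 0 then \<i> else 0)"
| "pauli1_entry PZ r c = (if r = c then (if r = 0 then 1 else -1) else 0)"

text \<open>Bit of computational basis index x for qubit q (0-based); qubit 0 is the
  leftmost tensor factor (most significant bit).\<close>
definition qbit :: "nat \<Rightarrow> nat \<Rightarrow> nat \<Rightarrow> nat" where
  "qbit n q x = (x div 2 ^ (n - 1 - q)) mod 2"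

definition pauli_mat :: "nat \<Rightarrow> pauli1 list \<Rightarrow> complex mat" where
  "pauli_mat n P = mat (2^n) (2^n)
     (\<lambda>(r, c). \<Prod>q<n. pauli1_entry (P ! q) (qbit n q r) (qbit n q c))"

definition pauli_weight :: "pauli1 list \<Rightarrow> nat" where
  "pauli_weight P = length (filter (\<lambda>x. x \<noteq> PI) P)"

definition mtrace :: "complex mat \<Rightarrow> complex" where
  "mtrace A = (\<Sum>i<dim_row A. A $$ (i, i))"

definition unitary_mat :: "nat \<Rightarrow> complex mat \<Rightarrow> bool" where
  "unitary_mat N U \<longleftrightarrow> U \<in> carrier_mat N N \<and> U * mat_adjoint U = 1\<^sub>m N \<and> mat_adjoint U * U = 1\<^sub>m N"

definition clifford :: "nat \<Rightarrow> complex mat \<Rightarrow> bool" where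
  "clifford n U \<longleftrightarrow> unitary_mat (2^n) U \<and>
     (\<forall>P. length P = n \<longrightarrow> (\<exists>c Q. length Q = n \<and>
         U * pauli_mat n P * mat_adjoint U = c \<cdot>\<^sub>m pauli_mat n Q))"

definition Z_on :: "nat \<Rightarrow> nat \<Rightarrow> complex mat" where
  "Z_on n q = pauli_mat n ((replicate n PI)[q := PZ])"

text \<open>Stabilizer generator g_{j+1} = U Z_{j+1+k} U^dagger, for 0-based j < n-k.\<close>
definition stab_gen :: "nat \<Rightarrow> nat \<Rightarrow> complex mat \<Rightarrow> nat \<Rightarrow> complex mat" where
  "stab_gen n k U j = U * Z_on n (k + j) * mat_adjoint U"

inductive_set stab_group :: "nat \<Rightarrow> nat \<Rightarrow> complex mat \<Rightarrow> complex mat set"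
  for n k U where
  one: "1\<^sub>m (2^n) \<in> stab_group n k U"
| gen: "j < n - k \<Longrightarrow> stab_gen n k U j \<in> stab_group n k U"
| mult: "a \<in> stab_group n k U \<Longrightarrow> b \<in> stab_group n k U \<Longrightarrow> a * b \<in> stab_group n k U"

text \<open>Syndrome (list of length n-k): entry j is True (=1) iff E does not commute with g_{j+1}.\<close>
definition syndrome :: "nat \<Rightarrow> nat \<Rightarrow> complex mat \<Rightarrow> complex mat \<Rightarrow> bool list" where
  "syndrome n k U E = map (\<lambda>j. \<not> (E * stab_gen n k U j = stab_gen n k U j * E)) [0..<n - k]"

definition synd_proj :: "nat \<Rightarrow> nat \<Rightarrow> complex mat \<Rightarrow> bool list \<Rightarrow> complex mat" where
  "synd_proj n k U s = foldr (\<lambda>j M. ((1/2 :: complex) \<cdot>\<^sub>m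
       (1\<^sub>m (2^n) + (if s ! j then -1 else 1) \<cdot>\<^sub>m stab_gen n k U j)) * M)
     [0..<n - k] (1\<^sub>m (2^n))"

definition syndrome_reps :: "nat \<Rightarrow> nat \<Rightarrow> complex mat \<Rightarrow> (bool list \<Rightarrow> pauli1 list) \<Rightarrow> bool" where
  "syndrome_reps n k U T \<longleftrightarrow>
     (\<forall>s. length s = n - k \<longrightarrow> length (T s) = n \<and> syndrome n k U (pauli_mat n (T s)) = s) \<and>
     T (replicate (n - k) False) = replicate n PI"

definition in_TS :: "nat \<Rightarrow> nat \<Rightarrow> complex mat \<Rightarrow> (bool list \<Rightarrow> pauli1 list) \<Rightarrow> pauli1 list \<Rightarrow> bool" where
  "in_TS n k U T E \<longleftrightarrow> (\<exists>s g c. length s = n - k \<and> g \<in> stab_group n k U \<and>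
      pauli_mat n E = c \<cdot>\<^sub>m (pauli_mat n (T s) * g))"

definition depol_prob :: "nat \<Rightarrow> real \<Rightarrow> pauli1 list \<Rightarrow> real" where
  "depol_prob n p E = (1 - 3/4 * p) ^ (n - pauli_weight E) * (p / 4) ^ pauli_weight E"

text \<open>W_{l,E,s} = (I^k (x) <l|) U^dagger C_s P_s sqrt(p_E) E U (I^k (x) |0>^{n-k}), a 2^k x 2^k matrix.\<close>
definition W_op :: "nat \<Rightarrow> nat \<Rightarrow> complex mat \<Rightarrow> (bool list \<Rightarrow> pauli1 list) \<Rightarrow> real \<Rightarrow>
    nat \<Rightarrow> pauli1 list \<Rightarrow> bool list \<Rightarrow> complex mat" where
  "W_op n k U T p l E s =
     (let M = mat_adjoint U * pauli_mat n (T s) * synd_proj n k U s *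
              (complex_of_real (sqrt (depol_prob n p E)) \<cdot>\<^sub>m pauli_mat n E) * U
      in mat (2^k) (2^k) (\<lambda>(a, b). M $$ (a * 2^(n - k) + l, b * 2^(n - k))))"

end

theory Submission
  imports Defs
begin

text \<open>
  Write \<open>s\<close> for the syndrome of \<open>E\<close> and \<open>N = E\<^sub>s E\<close>. Since \<open>E\<^sub>s\<close> and \<open>E\<close> have the same
  syndrome, \<open>N\<close> commutes with every generator \<open>g\<^sub>j = U Z\<^sub>k\<^sub>+\<^sub>j U\<^sup>\<dagger>\<close>, so \<open>U\<^sup>\<dagger> N U = c P\<close> with
  \<open>|c| = 1\<close> and a Pauli string \<open>P\<close> that is \<open>I\<close> or \<open>Z\<close> on every ancilla qubit. On an encoded
  state \<open>U(|a\<rangle>|0\<rangle>)\<close> every \<open>g\<^sub>j\<close> acts as \<open>+1\<close>, so \<open>E\<close> maps it into the \<open>s\<close>-eigenspace and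
  \<open>P\<^sub>s\<close> acts trivially; hence \<open>W\<^sub>l\<close> is the \<open>(l,0)\<close> ancilla block of \<open>\<surd>p c P\<close>. That block vanishes
  unless \<open>l = 0\<close>, where its trace is \<open>\<surd>p c \<Prod>\<^sub>q\<^sub><\<^sub>k tr P\<^sub>q\<close>, which is \<open>\<surd>p c 2\<^sup>k\<close> if \<open>P\<close> is the
  identity on the logical qubits and \<open>0\<close> otherwise. Finally, \<open>E \<in> T \<times> \<S>\<close> exactly when
  \<open>N\<close> lies in \<open>\<S>\<close> up to phase, i.e. when \<open>P\<close> is of the form \<open>I\<^sup>\<otimes>\<^sup>k \<otimes> (I/Z)\<^sup>\<otimes>\<^sup>n\<^sup>-\<^sup>k\<close>.
\<close>

section \<open>Single-qubit Pauli algebra\<close>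

fun pauli1_mult :: "pauli1 \<Rightarrow> pauli1 \<Rightarrow> pauli1" where
  "pauli1_mult PI b = b"
| "pauli1_mult a PI = a"
| "pauli1_mult PX PX = PI" | "pauli1_mult PY PY = PI" | "pauli1_mult PZ PZ = PI"
| "pauli1_mult PX PY = PZ" | "pauli1_mult PY PX = PZ"
| "pauli1_mult PX PZ = PY" | "pauli1_mult PZ PX = PY"
| "pauli1_mult PY PZ = PX" | "pauli1_mult PZ PY = PX"

fun pauli1_phase :: "pauli1 \<Rightarrow> pauli1 \<Rightarrow> complex" where
  "pauli1_phase PX PY = \<i>" | "pauli1_phase PY PX = - \<i>"
| "pauli1_phase PX PZ = - \<i>" | "pauli1_phase PZ PX = \<i>"
| "pauli1_phase PY PZ = \<i>" | "pauli1_phase PZ PY = - \<i>"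
| "pauli1_phase a b = 1"

definition pauli1_trace :: "pauli1 \<Rightarrow> complex" where
  "pauli1_trace a = pauli1_entry a 0 0 + pauli1_entry a 1 1"

lemma pauli1_mult_commute: "pauli1_mult a b = pauli1_mult b a"
  by (cases a; cases b; simp)

lemma pauli1_mult_eq_PI_iff: "pauli1_mult a b = PI \<longleftrightarrow> a = b"
  by (cases a; cases b; simp)

lemma pauli1_mult_PI_right [simp]: "pauli1_mult a PI = a"
  by (cases a; simp)

lemma pauli1_phase_self [simp]: "pauli1_phase a a = 1"
  by (cases a; simp)

lemma norm_pauli1_phase [simp]: "cmod (pauli1_phase a b) = 1"
  by (cases a; cases b; simp)

lemma pauli1_phase_nonzero [simp]: "pauli1_phase a b \<noteq> 0"
  by (cases a; cases b; simp)

lemma pauli1_phase_swap: "pauli1_phase a b = pauli1_phase b a \<or> pauli1_phase a b = - pauli1_phase b a"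
  by (cases a; cases b; simp)

lemma pauli1_entry_mult:
  assumes "r < 2" "c < 2"
  shows "pauli1_entry a r 0 * pauli1_entry b 0 c + pauli1_entry a r 1 * pauli1_entry b 1 c
         = pauli1_phase a b * pauli1_entry (pauli1_mult a b) r c"
  using assms by (cases a; cases b; auto simp: less_2_cases_iff)

lemma pauli1_trace_PI [simp]: "pauli1_trace PI = 2"
  by (simp add: pauli1_trace_def)

lemma pauli1_trace_eq_0: "a \<noteq> PI \<Longrightarrow> pauli1_trace a = 0"
  by (cases a) (auto simp: pauli1_trace_def)

lemma norm_prod_pauli1_trace_square:
  "(cmod (\<Prod>q<k. pauli1_trace (P!q)))\<^sup>2 = (if \<forall>q<k. P!q = PI then 2 ^ (2 * k) else 0)"
proof -
  have "(\<Prod>q<k. pauli1_trace (P!q)) = (if \<forall>q<k. P!q = PI then 2 ^ k else 0)"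
    by (auto intro!: prod_zero) (use pauli1_trace_eq_0 in blast)
  then show ?thesis by (simp add: norm_power power_even_eq)
qed

lemma depol_prob_nonneg: "0 \<le> p \<Longrightarrow> p \<le> 1 \<Longrightarrow> 0 \<le> depol_prob n p E"
  by (simp add: depol_prob_def)

section \<open>Binary digits of basis indices\<close>

lemma sum_prod_binary_digits:
  fixes g :: "nat \<Rightarrow> nat \<Rightarrow> 'a::comm_ring_1"
  shows "(\<Sum>x<2^n. \<Prod>i<n. g i (x div 2^i mod 2)) = (\<Prod>i<n. g i 0 + g i 1)"
proof (induction n arbitrary: g)
  case 0 then show ?case by simp
next
  case (Suc n)
  let ?A = "{..<(2::nat)^n}" and ?B = "(\<lambda>y. 2^n + y) ` {..<2^n}"
  have split: "{..<2^Suc n} = ?A \<union> ?B"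
  proof
    show "{..<2 ^ Suc n} \<subseteq> ?A \<union> ?B"
    proof
      fix x assume x: "x \<in> {..<(2::nat)^Suc n}"
      show "x \<in> ?A \<union> ?B"
      proof (cases "x < 2^n")
        case False then have "x = 2^n + (x - 2^n)" "x - 2^n < 2^n" using x by auto
        then show ?thesis by blast
      qed simp
    qed
  qed auto
  have inj: "inj_on (\<lambda>y. 2^n + y) ?A" by (auto simp: inj_on_def)
  have low_digit: "(2^n + x) div 2^i mod 2 = x div 2 ^ i mod 2" if "i < n" for x i :: nat
  proof -
    have "(2^n + x) div 2^i = 2^(n-i) + x div 2^i"
      using that by (simp add: power_diff div_add1_eq[of "2^n"] le_imp_power_dvd)
    moreover have "((2::nat)^(n-i)) mod 2 = 0" using that by simp
    ultimately show ?thesis by (metis mod_add_left_eq add_0)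
  qed
  have "(\<Sum>x<2^Suc n. \<Prod>i<Suc n. g i (x div 2^i mod 2))
      = (\<Sum>x\<in>?A. \<Prod>i<Suc n. g i (x div 2^i mod 2)) + (\<Sum>x\<in>?B. \<Prod>i<Suc n. g i (x div 2^i mod 2))"
    unfolding split by (rule sum.union_disjoint) auto
  also have "(\<Sum>x\<in>?A. \<Prod>i<Suc n. g i (x div 2^i mod 2)) = (\<Sum>x\<in>?A. \<Prod>i<n. g i (x div 2^i mod 2)) * g n 0"
    by (simp add: sum_distrib_right)
  also have "(\<Sum>x\<in>?B. \<Prod>i<Suc n. g i (x div 2^i mod 2))
      = (\<Sum>x\<in>?A. \<Prod>i<Suc n. g i ((2^n + x) div 2^i mod 2))"
    by (simp add: sum.reindex[OF inj])
  also have "\<dots> = (\<Sum>x\<in>?A. \<Prod>i<n. g i (x div 2^i mod 2)) * g n 1"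
    unfolding sum_distrib_right by (rule sum.cong) (auto simp: low_digit intro!: prod.cong)
  finally show ?case using Suc[of g] by (simp add: algebra_simps)
qed

lemma sum_prod_qbit:
  fixes f :: "nat \<Rightarrow> nat \<Rightarrow> 'a::comm_ring_1"
  shows "(\<Sum>x<2^n. \<Prod>q<n. f q (qbit n q x)) = (\<Prod>q<n. f q 0 + f q 1)"
proof -
  have reverse: "(\<Prod>q<n. h q) = (\<Prod>i<n. h (n - Suc i))" for h :: "nat \<Rightarrow> 'a"
    by (rule prod.nat_diff_reindex[symmetric])
  have "(\<Prod>q<n. f q (qbit n q x)) = (\<Prod>i<n. f (n - Suc i) (x div 2^i mod 2))" for x
    by (subst reverse) (auto simp: qbit_def Suc_diff_Suc intro!: prod.cong)
  then have "(\<Sum>x<2^n. \<Prod>q<n. f q (qbit n q x)) = (\<Prod>i<n. f (n - Suc i) 0 + f (n - Suc i) 1)"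
    using sum_prod_binary_digits[where g = "\<lambda>i b. f (n - Suc i) b"] by simp
  also have "\<dots> = (\<Prod>q<n. f q 0 + f q 1)"
    using reverse[of "\<lambda>q. f q 0 + f q 1"] by simp
  finally show ?thesis .
qed

lemma qbit_less_2: "qbit n q x < 2"
  by (simp add: qbit_def)

lemma qbit_eqI:
  assumes "r < 2^n" "c < 2^n" "\<forall>q<n. qbit n q r = qbit n q c"
  shows "r = c"
proof -
  have "bit r i = bit c i" for i
  proof (cases "i < n")
    case True
    have "qbit n (n - Suc i) r = qbit n (n - Suc i) c" using assms(3) True by simp
    then have "r div 2^i mod 2 = c div 2^i mod 2" using True by (simp add: qbit_def Suc_diff_Suc)
    then show ?thesis by (simp add: bit_iff_odd odd_iff_mod_2_eq_one)
  next
    case False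
    then have "(2::nat)^n \<le> 2^i" by simp
    then have "r < 2^i" "c < 2^i" using assms(1,2) by linarith+
    then show ?thesis by (simp add: bit_iff_odd)
  qed
  then show ?thesis by (simp add: bit_eq_iff)
qed

lemma prod_qbit_indicator:
  assumes "r < 2^n" "c < 2^n"
  shows "(\<Prod>q<n. if qbit n q r = qbit n q c then (1::complex) else 0) = (if r = c then 1 else 0)"
proof -
  have "(\<Prod>q\<in>A. if B q then (1::complex) else 0) = (if \<forall>q\<in>A. B q then 1 else 0)"
    if "finite A" for A :: "nat set" and B
    using that by (induction A rule: finite_induct) auto
  then show ?thesis using qbit_eqI[OF assms] by auto
qed

text \<open>An index \<open>a * 2\<^sup>m + l\<close> of \<open>k + m\<close> qubits encodes \<open>|a\<rangle> \<otimes> |l\<rangle>\<close>.\<close>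

lemma tensor_index_less:
  assumes "a < 2^k" "l < 2^m"
  shows "a * 2^m + l < (2::nat)^(k + m)"
proof -
  have "a * 2^m + l < (a + 1) * 2^m" using assms by simp
  also have "\<dots> \<le> 2^k * 2^m" using assms by (intro mult_right_mono) auto
  finally show ?thesis by (simp add: power_add)
qed

lemma qbit_tensor_index_high:
  assumes "q < k" "l < 2^m"
  shows "qbit (k + m) q (a * 2^m + l) = qbit k q a"
proof -
  have e: "k + m - 1 - q = m + (k - 1 - q)" using assms by simp
  have "(a * 2^m + l) div 2^m = a" using assms(2) by simp
  then have "(a * 2^m + l) div 2^(k + m - 1 - q) = a div 2^(k - 1 - q)"
    unfolding e power_add by (simp add: div_mult2_eq)
  then show ?thesis by (simp add: qbit_def)
qed

lemma qbit_tensor_index_low: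
  assumes "j < m" "l < 2^m"
  shows "qbit (k + m) (k + j) (a * 2^m + l) = qbit m j l"
proof -
  define e where "e = m - 1 - j"
  have e1: "k + m - 1 - (k + j) = e" "m - 1 - j = e" using assms by (simp_all add: e_def)
  have em: "e < m" using assms e_def by simp
  have "a * 2^m = (a * 2^(m - e)) * 2^e" using em by (simp add: power_add[symmetric])
  then have "(a * 2^m + l) div 2^e = (l + (a * 2^(m - e)) * 2^e) div 2^e" by (metis add.commute)
  also have "\<dots> = a * 2^(m - e) + l div 2^e" by (rule div_mult_self1) simp
  finally have "(a * 2^m + l) div 2^e = a * 2^(m - e) + l div 2^e" .
  moreover have "(a * 2^(m - e)) mod 2 = (0::nat)" using em by simp
  ultimately have "(a * 2^m + l) div 2^e mod 2 = l div 2^e mod 2" by (metis mod_add_left_eq add_0)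
  then show ?thesis unfolding qbit_def e1 .
qed

lemma prod_lessThan_add:
  fixes f :: "nat \<Rightarrow> 'a::comm_monoid_mult"
  shows "(\<Prod>q<k + m. f q) = (\<Prod>q<k. f q) * (\<Prod>j<m. f (k + j))"
  by (induction m) (simp_all add: mult.assoc)

lemma one_smult_mat [simp]: "(1::'a::semiring_1) \<cdot>\<^sub>m A = A"
  by (auto intro!: eq_matI)

lemma smult_smult_mat: "a \<cdot>\<^sub>m (b \<cdot>\<^sub>m A) = (a * b :: 'a::semigroup_mult) \<cdot>\<^sub>m A"
  by (auto intro!: eq_matI simp: mult.assoc)

lemma smult_mat_mult_mat_vec:
  fixes A :: "'a::comm_ring mat"
  assumes "dim_vec w = dim_col A"
  shows "(c \<cdot>\<^sub>m A) *\<^sub>v w = c \<cdot>\<^sub>v (A *\<^sub>v w)"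
  using assms by (intro eq_vecI) auto

lemma smult_mat_cancel:
  fixes c :: "'a::field"
  assumes "c \<noteq> 0" "c \<cdot>\<^sub>m A = c \<cdot>\<^sub>m B"
  shows "A = B"
proof -
  have "(1 / c) \<cdot>\<^sub>m (c \<cdot>\<^sub>m A) = (1 / c) \<cdot>\<^sub>m (c \<cdot>\<^sub>m B)" using assms(2) by simp
  then show ?thesis using assms(1) by (simp add: smult_smult_mat)
qed

lemma mult_unit_vec_eq_col:
  fixes A :: "'a::semiring_1 mat"
  assumes "A \<in> carrier_mat N N" "y < N"
  shows "A *\<^sub>v unit_vec N y = col A (y :: nat)"
  using assms by (intro eq_vecI) (auto simp: scalar_prod_right_unit)

lemma smult_cancel_right_invertible:
  fixes A B :: "complex mat"
  assumes "A \<in> carrier_mat N N" "B \<in> carrier_mat N N" "A * B = 1\<^sub>m N" "0 < N"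
    and "a \<cdot>\<^sub>m A = b \<cdot>\<^sub>m A"
  shows "a = b"
proof -
  have "a \<cdot>\<^sub>m (A * B) = b \<cdot>\<^sub>m (A * B)"
    using assms by (metis mult_smult_assoc_mat)
  then have "(a \<cdot>\<^sub>m 1\<^sub>m N :: complex mat) $$ (0,0) = (b \<cdot>\<^sub>m 1\<^sub>m N) $$ (0,0)"
    using assms(3) by simp
  then show ?thesis using assms(4) by simp
qed

lemma mtrace_smult: "A \<in> carrier_mat N N \<Longrightarrow> mtrace (c \<cdot>\<^sub>m A) = c * mtrace A"
  by (auto simp add: mtrace_def sum_distrib_left intro!: sum.cong)

lemma eigvec_fixed_by_half_one_plus_smult:
  fixes A :: "complex mat"
  assumes "A \<in> carrier_mat N N" "w \<in> carrier_vec N" "A *\<^sub>v w = \<sigma> \<cdot>\<^sub>v w" "\<sigma> * \<sigma> = 1"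
  shows "((1/2 :: complex) \<cdot>\<^sub>m (1\<^sub>m N + \<sigma> \<cdot>\<^sub>m A)) *\<^sub>v w = w"
proof -
  have "(1\<^sub>m N + \<sigma> \<cdot>\<^sub>m A) *\<^sub>v w = w + \<sigma> \<cdot>\<^sub>v (\<sigma> \<cdot>\<^sub>v w)"
    using assms by (simp add: add_mult_distrib_mat_vec[of _ N N] smult_mat_mult_mat_vec)
  then have "((1/2 :: complex) \<cdot>\<^sub>m (1\<^sub>m N + \<sigma> \<cdot>\<^sub>m A)) *\<^sub>v w = (1/2) \<cdot>\<^sub>v (w + \<sigma> \<cdot>\<^sub>v (\<sigma> \<cdot>\<^sub>v w))"
    using assms by (simp add: smult_mat_mult_mat_vec)
  also have "\<dots> = w"
    using assms(4) by (intro eq_vecI) (simp_all add: mult.assoc[symmetric])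
  finally show ?thesis .
qed

definition pauli_string_mult :: "pauli1 list \<Rightarrow> pauli1 list \<Rightarrow> pauli1 list" where
  "pauli_string_mult P Q = map (\<lambda>i. pauli1_mult (P!i) (Q!i)) [0..<length P]"

definition pauli_string_phase :: "pauli1 list \<Rightarrow> pauli1 list \<Rightarrow> complex" where
  "pauli_string_phase P Q = (\<Prod>q<length P. pauli1_phase (P!q) (Q!q))"

definition Z_string :: "nat \<Rightarrow> nat \<Rightarrow> pauli1 list" where
  "Z_string n q = (replicate n PI)[q := PZ]"

lemma length_pauli_string_mult [simp]: "length (pauli_string_mult P Q) = length P"
  by (simp add: pauli_string_mult_def)

lemma nth_pauli_string_mult [simp]:
  "i < length P \<Longrightarrow> pauli_string_mult P Q ! i = pauli1_mult (P!i) (Q!i)"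
  by (simp add: pauli_string_mult_def)

lemma pauli_string_mult_commute: "length P = length Q \<Longrightarrow> pauli_string_mult P Q = pauli_string_mult Q P"
  by (rule nth_equalityI) (auto simp: pauli1_mult_commute)

lemma pauli_string_mult_self: "pauli_string_mult P P = replicate (length P) PI"
  by (rule nth_equalityI) (auto simp: pauli1_mult_eq_PI_iff)

lemma norm_pauli_string_phase [simp]: "cmod (pauli_string_phase P Q) = 1"
  by (simp add: pauli_string_phase_def prod_norm[symmetric])

lemma length_Z_string [simp]: "length (Z_string n q) = n"
  by (simp add: Z_string_def)

lemma nth_Z_string: "i < n \<Longrightarrow> Z_string n q ! i = (if i = q then PZ else PI)"
  by (simp add: Z_string_def)

lemma Z_on_eq_pauli_mat: "Z_on n q = pauli_mat n (Z_string n q)"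
  by (simp add: Z_on_def Z_string_def)

lemma pauli_string_phase_Z_string:
  assumes "q < n" "length P = n"
  shows "pauli_string_phase P (Z_string n q) = pauli1_phase (P!q) PZ"
    and "pauli_string_phase (Z_string n q) P = pauli1_phase PZ (P!q)"
proof -
  have "pauli_string_phase P (Z_string n q) = (\<Prod>i<n. if i = q then pauli1_phase (P!q) PZ else 1)"
    unfolding pauli_string_phase_def assms(2) by (rule prod.cong) (auto simp: nth_Z_string)
  then show "pauli_string_phase P (Z_string n q) = pauli1_phase (P!q) PZ"
    using assms(1) by (simp add: prod.delta)
  have "pauli_string_phase (Z_string n q) P = (\<Prod>i<n. if i = q then pauli1_phase PZ (P!q) else 1)"
    unfolding pauli_string_phase_def by (rule prod.cong) (auto simp: nth_Z_string)
  then show "pauli_string_phase (Z_string n q) P = pauli1_phase PZ (P!q)"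
    using assms(1) by (simp add: prod.delta)
qed

lemma finite_pauli_strings: "finite {P :: pauli1 list. length P = n}"
proof -
  have "(UNIV :: pauli1 set) = {PI, PX, PY, PZ}" by (auto intro: pauli1.exhaust)
  then have "finite (UNIV :: pauli1 set)" by (metis finite.emptyI finite.insertI)
  from finite_lists_length_eq[OF this, of n] show ?thesis by simp
qed

section \<open>Pauli matrices\<close>

lemma pauli_mat_carrier [simp]: "pauli_mat n P \<in> carrier_mat (2^n) (2^n)"
  and dim_pauli_mat [simp]: "dim_row (pauli_mat n P) = 2^n" "dim_col (pauli_mat n P) = 2^n"
  by (simp_all add: pauli_mat_def)

lemma index_pauli_mat:
  "r < 2^n \<Longrightarrow> c < 2^n \<Longrightarrow>
   pauli_mat n P $$ (r,c) = (\<Prod>q<n. pauli1_entry (P ! q) (qbit n q r) (qbit n q c))"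
  by (simp add: pauli_mat_def)

lemma pauli_mat_mult:
  assumes "length P = n" "length Q = n"
  shows "pauli_mat n P * pauli_mat n Q = pauli_string_phase P Q \<cdot>\<^sub>m pauli_mat n (pauli_string_mult P Q)"
    (is "?A = ?B")
proof (rule eq_matI)
  fix r c assume "r < dim_row ?B" and "c < dim_col ?B"
  then have r: "r < 2^n" and c: "c < 2^n" by simp_all
  have "?A $$ (r,c) = (\<Sum>x<2^n. \<Prod>q<n. (\<lambda>q b. pauli1_entry (P ! q) (qbit n q r) b *
                   pauli1_entry (Q ! q) b (qbit n q c)) q (qbit n q x))"
    using r c by (simp add: scalar_prod_def index_pauli_mat atLeast0LessThan prod.distrib)
  also have "\<dots> = (\<Prod>q<n. pauli1_entry (P ! q) (qbit n q r) 0 * pauli1_entry (Q ! q) 0 (qbit n q c)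
          + pauli1_entry (P ! q) (qbit n q r) 1 * pauli1_entry (Q ! q) 1 (qbit n q c))"
    by (rule sum_prod_qbit)
  also have "\<dots> = (\<Prod>q<n. pauli1_phase (P!q) (Q!q) *
                   pauli1_entry (pauli1_mult (P!q) (Q!q)) (qbit n q r) (qbit n q c))"
    by (intro prod.cong refl pauli1_entry_mult qbit_less_2)
  also have "\<dots> = ?B $$ (r,c)"
    using r c assms by (simp add: prod.distrib index_pauli_mat pauli_string_phase_def)
  finally show "?A $$ (r,c) = ?B $$ (r,c)" .
qed auto

lemma pauli_mat_identity: "pauli_mat n (replicate n PI) = 1\<^sub>m (2^n)"
  by (rule eq_matI) (simp_all add: index_pauli_mat prod_qbit_indicator)

lemma pauli_mat_square: "length P = n \<Longrightarrow> pauli_mat n P * pauli_mat n P = 1\<^sub>m (2^n)"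
  by (simp add: pauli_mat_mult pauli_string_mult_self pauli_string_phase_def pauli_mat_identity)

lemma pauli_mat_smult_cancel:
  assumes "length P = n" "c \<cdot>\<^sub>m pauli_mat n P = d \<cdot>\<^sub>m pauli_mat n P"
  shows "c = d"
  using smult_cancel_right_invertible[OF _ _ pauli_mat_square] assms by simp

lemma mtrace_pauli_mat: "mtrace (pauli_mat n P) = (\<Prod>q<n. pauli1_trace (P!q))"
proof -
  have "mtrace (pauli_mat n P) = (\<Sum>x<2^n. \<Prod>q<n. (\<lambda>q b. pauli1_entry (P!q) b b) q (qbit n q x))"
    by (simp add: mtrace_def index_pauli_mat)
  also have "\<dots> = (\<Prod>q<n. pauli1_entry (P!q) 0 0 + pauli1_entry (P!q) 1 1)"
    by (rule sum_prod_qbit)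
  finally show ?thesis by (simp add: pauli1_trace_def)
qed

text \<open>Distinct Pauli strings are orthogonal in trace inner product, so they are not proportional.\<close>

lemma pauli_mat_eq_smult_imp_eq:
  assumes "length P = n" "length Q = n" "pauli_mat n P = c \<cdot>\<^sub>m pauli_mat n Q"
  shows "P = Q"
proof (rule ccontr)
  assume "P \<noteq> Q"
  then obtain q where q: "q < n" "P!q \<noteq> Q!q"
    using assms(1,2) nth_equalityI[of P Q] by auto
  have "pauli_mat n P * pauli_mat n Q = c \<cdot>\<^sub>m (pauli_mat n Q * pauli_mat n Q)"
    using assms(3) by (simp add: mult_smult_assoc_mat[of _ "2^n" "2^n" _ "2^n"])
  then have "pauli_string_phase P Q \<cdot>\<^sub>m pauli_mat n (pauli_string_mult P Q) = c \<cdot>\<^sub>m 1\<^sub>m (2^n)"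
    by (simp only: pauli_mat_square[OF assms(2)] pauli_mat_mult[OF assms(1,2)])
  moreover have "pauli1_trace (pauli_string_mult P Q ! q) = 0"
    using q assms(1) by (simp add: pauli1_trace_eq_0 pauli1_mult_eq_PI_iff)
  then have "mtrace (pauli_mat n (pauli_string_mult P Q)) = 0"
    unfolding mtrace_pauli_mat using q(1) by (intro prod_zero) auto
  moreover have "mtrace (c \<cdot>\<^sub>m 1\<^sub>m (2^n)) = c * 2^n"
    by (simp add: mtrace_smult[of _ "2^n"] mtrace_def)
  ultimately have "c * 2^n = 0"
    by (metis mtrace_smult[OF pauli_mat_carrier] mult_zero_right)
  then have "c = 0" by simp
  then have "1 \<cdot>\<^sub>m pauli_mat n P = (0::complex) \<cdot>\<^sub>m pauli_mat n P"
    using assms(3) by (auto intro!: eq_matI)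
  then have "(1::complex) = 0" by (rule pauli_mat_smult_cancel[OF assms(1)])
  then show False by simp
qed

lemma pauli_mat_commute_or_anticommute:
  assumes "length P = n" "length Q = n"
  obtains \<sigma> :: complex where "\<sigma> = 1 \<or> \<sigma> = -1"
    and "pauli_mat n P * pauli_mat n Q = \<sigma> \<cdot>\<^sub>m (pauli_mat n Q * pauli_mat n P)"
proof -
  define f where "f q = pauli1_phase (P!q) (Q!q) / pauli1_phase (Q!q) (P!q)" for q
  have f_sign: "f q = 1 \<or> f q = -1" for q
    using pauli1_phase_swap[of "P!q" "Q!q"] by (auto simp: f_def)
  have "(\<Prod>q<n. f q) = 1 \<or> (\<Prod>q<n. f q) = -1"
  proof (induction n)
    case (Suc m) then show ?case using f_sign[of m] by auto
  qed simp
  moreover have "pauli_string_phase P Q = (\<Prod>q<n. f q) * pauli_string_phase Q P"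
    using assms by (auto simp: pauli_string_phase_def f_def prod.distrib[symmetric] intro!: prod.cong)
  ultimately show ?thesis
    using that assms
    by (simp add: pauli_mat_mult pauli_string_mult_commute smult_smult_mat)
qed

lemma pauli_mat_commute_Z_on:
  assumes "length P = n" "q < n" "pauli_mat n P * Z_on n q = Z_on n q * pauli_mat n P"
  shows "P!q = PI \<or> P!q = PZ"
proof -
  have "pauli1_phase (P!q) PZ \<cdot>\<^sub>m pauli_mat n (pauli_string_mult (Z_string n q) P)
      = pauli1_phase PZ (P!q) \<cdot>\<^sub>m pauli_mat n (pauli_string_mult (Z_string n q) P)"
    using assms pauli_string_mult_commute[of P "Z_string n q"]
    by (simp add: Z_on_eq_pauli_mat pauli_mat_mult pauli_string_phase_Z_string)
  then have "pauli1_phase (P!q) PZ = pauli1_phase PZ (P!q)"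
    by (rule pauli_mat_smult_cancel[rotated]) simp
  then show ?thesis by (cases "P!q") auto
qed

lemma Z_on_mult_unit_vec:
  assumes "q < n" "y < 2^n" "qbit n q y = 0"
  shows "Z_on n q *\<^sub>v unit_vec (2^n) y = unit_vec (2^n) y"
proof (rule eq_vecI)
  fix r assume "r < dim_vec (unit_vec (2^n) y :: complex vec)"
  then have r: "r < 2^n" by simp
  have "pauli1_entry (Z_string n q ! i) (qbit n i r) (qbit n i y)
      = (if qbit n i r = qbit n i y then 1 else 0)" if "i < n" for i
    using that assms(3) by (cases "i = q") (auto simp: nth_Z_string)
  then have "Z_on n q $$ (r, y) = (\<Prod>i<n. if qbit n i r = qbit n i y then (1::complex) else 0)"
    using r assms(2) by (simp add: Z_on_eq_pauli_mat index_pauli_mat)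
  then show "(Z_on n q *\<^sub>v unit_vec (2^n) y) $ r = unit_vec (2^n) y $ r"
    using r assms(2) by (simp add: Z_on_eq_pauli_mat mult_unit_vec_eq_col prod_qbit_indicator)
qed (simp add: Z_on_eq_pauli_mat)

section \<open>Conjugation by a Clifford unitary\<close>

locale clifford_encoder =
  fixes n :: nat and U :: "complex mat"
  assumes clifford: "clifford n U"
begin

lemma carrier_U [simp]: "U \<in> carrier_mat (2^n) (2^n)"
  using clifford by (simp add: clifford_def unitary_mat_def)

lemma carrier_adjoint_U [simp]: "mat_adjoint U \<in> carrier_mat (2^n) (2^n)"
  using carrier_matD[OF carrier_U] unfolding mat_adjoint_def carrier_mat_def by simp

lemma dim_U [simp]:
  "dim_row U = 2^n" "dim_col U = 2^n" "dim_row (mat_adjoint U) = 2^n" "dim_col (mat_adjoint U) = 2^n"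
  using carrier_matD[OF carrier_U] carrier_matD[OF carrier_adjoint_U] by simp_all

lemma U_mult_adjoint [simp]: "U * mat_adjoint U = 1\<^sub>m (2^n)"
  and adjoint_mult_U [simp]: "mat_adjoint U * U = 1\<^sub>m (2^n)"
  using clifford by (simp_all add: clifford_def unitary_mat_def)

lemma mult_carrier_mat_n [simp]:
  "A \<in> carrier_mat (2^n) (2^n) \<Longrightarrow> B \<in> carrier_mat (2^n) (2^n) \<Longrightarrow> A * B \<in> carrier_mat (2^n) (2^n)"
  by (rule mult_carrier_mat)

lemmas assoc_mult_mat_n = assoc_mult_mat[of _ "2^n" "2^n" _ "2^n" _ "2^n"]

lemma mult_smult_assoc_mat_n:
  fixes A B :: "complex mat"
  shows "A \<in> carrier_mat (2^n) (2^n) \<Longrightarrow> B \<in> carrier_mat (2^n) (2^n) \<Longrightarrow> (c \<cdot>\<^sub>m A) * B = c \<cdot>\<^sub>m (A * B)"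
  by (rule mult_smult_assoc_mat)

lemma mult_smult_distrib_n:
  fixes A B :: "complex mat"
  shows "A \<in> carrier_mat (2^n) (2^n) \<Longrightarrow> B \<in> carrier_mat (2^n) (2^n) \<Longrightarrow> A * (c \<cdot>\<^sub>m B) = c \<cdot>\<^sub>m (A * B)"
  by (rule mult_smult_distrib)

lemma adjoint_U_mult_U_mult [simp]: "X \<in> carrier_mat (2^n) (2^n) \<Longrightarrow> mat_adjoint U * (U * X) = X"
  and U_mult_adjoint_U_mult [simp]: "X \<in> carrier_mat (2^n) (2^n) \<Longrightarrow> U * (mat_adjoint U * X) = X"
  by (simp_all add: assoc_mult_mat_n[symmetric])

lemma mult_mat_vec_carrier_n [simp]:
  "A \<in> carrier_mat (2^n) (2^n) \<Longrightarrow> v \<in> carrier_vec (2^n) \<Longrightarrow> A *\<^sub>v v \<in> carrier_vec (2^n)"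
  by (rule mult_mat_vec_carrier)

lemma assoc_mult_mat_vec_n [simp]:
  "A \<in> carrier_mat (2^n) (2^n) \<Longrightarrow> B \<in> carrier_mat (2^n) (2^n) \<Longrightarrow> v \<in> carrier_vec (2^n)
   \<Longrightarrow> (A * B) *\<^sub>v v = A *\<^sub>v (B *\<^sub>v v)"
  by (rule assoc_mult_mat_vec)

lemma adjoint_U_mult_U_mult_vec [simp]: "v \<in> carrier_vec (2^n) \<Longrightarrow> mat_adjoint U *\<^sub>v (U *\<^sub>v v) = v"
  by (simp flip: assoc_mult_mat_vec_n)

lemma pauli_mat_mult_pauli_mat_mult [simp]:
  "length P = n \<Longrightarrow> X \<in> carrier_mat (2^n) (2^n) \<Longrightarrow> pauli_mat n P * (pauli_mat n P * X) = X"
  by (simp add: assoc_mult_mat_n[symmetric] pauli_mat_square)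

lemma conj_mult:
  assumes "A \<in> carrier_mat (2^n) (2^n)" "B \<in> carrier_mat (2^n) (2^n)"
  shows "(U * A * mat_adjoint U) * (U * B * mat_adjoint U) = U * (A * B) * mat_adjoint U"
    and "(mat_adjoint U * A * U) * (mat_adjoint U * B * U) = mat_adjoint U * (A * B) * U"
  using assms by (simp_all add: assoc_mult_mat_n)

lemma conj_smult:
  assumes "A \<in> carrier_mat (2^n) (2^n)"
  shows "U * (c \<cdot>\<^sub>m A) * mat_adjoint U = c \<cdot>\<^sub>m (U * A * mat_adjoint U)"
    and "mat_adjoint U * (c \<cdot>\<^sub>m A) * U = c \<cdot>\<^sub>m (mat_adjoint U * A * U)"
  using assms by (simp_all add: mult_smult_assoc_mat_n mult_smult_distrib_n)

lemma conj_inverse: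
  assumes "A \<in> carrier_mat (2^n) (2^n)"
  shows "mat_adjoint U * (U * A * mat_adjoint U) * U = A"
    and "U * (mat_adjoint U * A * U) * mat_adjoint U = A"
  using assms by (simp_all add: assoc_mult_mat_n)

lemma conj_pauli_mat:
  "length P = n \<Longrightarrow> \<exists>c Q. length Q = n \<and> U * pauli_mat n P * mat_adjoint U = c \<cdot>\<^sub>m pauli_mat n Q"
  using clifford by (simp add: clifford_def)

lemma conj_pauli_phase_square:
  assumes "length P = n" "length Q = n" "U * pauli_mat n P * mat_adjoint U = c \<cdot>\<^sub>m pauli_mat n Q"
  shows "c * c = 1"
proof -
  have "(U * pauli_mat n P * mat_adjoint U) * (U * pauli_mat n P * mat_adjoint U) = 1\<^sub>m (2^n)"
    using assms(1) by (simp add: conj_mult pauli_mat_square)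
  moreover have "(c \<cdot>\<^sub>m pauli_mat n Q) * (c \<cdot>\<^sub>m pauli_mat n Q) = (c * c) \<cdot>\<^sub>m 1\<^sub>m (2^n)"
    using assms(2)
    by (simp add: mult_smult_assoc_mat_n mult_smult_distrib_n pauli_mat_square smult_smult_mat)
  ultimately have "(1 \<cdot>\<^sub>m 1\<^sub>m (2^n) :: complex mat) $$ (0,0) = ((c * c) \<cdot>\<^sub>m 1\<^sub>m (2^n)) $$ (0,0)"
    using assms(3) by simp
  then show ?thesis by simp
qed

lemma pauli_mat_eq_smult_adjoint_conj:
  assumes "U * pauli_mat n P * mat_adjoint U = c \<cdot>\<^sub>m pauli_mat n Q"
  shows "pauli_mat n P = c \<cdot>\<^sub>m (mat_adjoint U * pauli_mat n Q * U)"
  using conj_inverse(1)[of "pauli_mat n P"] assms by (simp add: conj_smult)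

text \<open>
  The definition of a Clifford unitary only says that conjugation by \<open>U\<close> maps Pauli strings
  to Pauli strings up to phase; that conjugation by \<open>U\<^sup>\<dagger>\<close> does too follows because the induced
  map on the finite set of Pauli strings is injective.
\<close>

definition conj_pauli_string :: "pauli1 list \<Rightarrow> pauli1 list" where
  "conj_pauli_string P = (SOME Q. length Q = n \<and> (\<exists>c. U * pauli_mat n P * mat_adjoint U = c \<cdot>\<^sub>m pauli_mat n Q))"

lemma conj_pauli_string:
  assumes "length P = n"
  shows "length (conj_pauli_string P) = n"
    and "\<exists>c. U * pauli_mat n P * mat_adjoint U = c \<cdot>\<^sub>m pauli_mat n (conj_pauli_string P)"
proof -
  have "\<exists>Q. length Q = n \<and> (\<exists>c. U * pauli_mat n P * mat_adjoint U = c \<cdot>\<^sub>m pauli_mat n Q)"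
    using conj_pauli_mat[OF assms] by blast
  from someI_ex[OF this]
  show "length (conj_pauli_string P) = n"
    and "\<exists>c. U * pauli_mat n P * mat_adjoint U = c \<cdot>\<^sub>m pauli_mat n (conj_pauli_string P)"
    unfolding conj_pauli_string_def by blast+
qed

lemma inj_on_conj_pauli_string: "inj_on conj_pauli_string {P. length P = n}"
proof (rule inj_onI)
  fix P1 P2 assume "P1 \<in> {P. length P = n}" "P2 \<in> {P. length P = n}"
    and eq: "conj_pauli_string P1 = conj_pauli_string P2"
  then have len: "length P1 = n" "length P2 = n" by auto
  let ?Q = "conj_pauli_string P1"
  obtain c1 c2 where c1: "U * pauli_mat n P1 * mat_adjoint U = c1 \<cdot>\<^sub>m pauli_mat n ?Q"
    and c2: "U * pauli_mat n P2 * mat_adjoint U = c2 \<cdot>\<^sub>m pauli_mat n ?Q"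
    using conj_pauli_string(2)[OF len(1)] conj_pauli_string(2)[OF len(2)] eq by auto
  have "c2 * c2 = 1"
    using conj_pauli_phase_square[OF len(2) _ c2] conj_pauli_string(1)[OF len(1)] by blast
  then have "c2 \<cdot>\<^sub>m pauli_mat n P2 = mat_adjoint U * pauli_mat n ?Q * U"
    using pauli_mat_eq_smult_adjoint_conj[OF c2] by (simp add: smult_smult_mat)
  then have "pauli_mat n P1 = (c1 * c2) \<cdot>\<^sub>m pauli_mat n P2"
    using pauli_mat_eq_smult_adjoint_conj[OF c1] by (metis smult_smult_mat)
  then show "P1 = P2" using pauli_mat_eq_smult_imp_eq[OF len] by blast
qed

lemma conj_pauli_string_surj: "conj_pauli_string ` {P. length P = n} = {P. length P = n}"
  using finite_pauli_strings inj_on_conj_pauli_string conj_pauli_string(1)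
  by (intro endo_inj_surj) auto

lemma adjoint_conj_pauli_mat:
  assumes "length Q = n"
  obtains c P where "length P = n" "c * c = 1"
    and "mat_adjoint U * pauli_mat n Q * U = c \<cdot>\<^sub>m pauli_mat n P"
proof -
  obtain P where P: "length P = n" "conj_pauli_string P = Q"
    using assms conj_pauli_string_surj by (metis (mono_tags, lifting) imageE mem_Collect_eq)
  then obtain c where c: "U * pauli_mat n P * mat_adjoint U = c \<cdot>\<^sub>m pauli_mat n Q"
    using conj_pauli_string(2) by blast
  have cc: "c * c = 1" using conj_pauli_phase_square[OF P(1) assms c] .
  then have "mat_adjoint U * pauli_mat n Q * U = c \<cdot>\<^sub>m pauli_mat n P"
    using pauli_mat_eq_smult_adjoint_conj[OF c] by (simp add: smult_smult_mat)
  then show ?thesis using that P(1) cc by blast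
qed

end

section \<open>Stabilizer group and syndromes\<close>

locale stabilizer_code = clifford_encoder +
  fixes k :: nat
  assumes k_le_n: "k \<le> n"
begin

lemma stab_gen_eq: "stab_gen n k U j = U * pauli_mat n (Z_string n (k + j)) * mat_adjoint U"
  by (simp add: stab_gen_def Z_on_eq_pauli_mat)

lemma carrier_stab_gen [simp]: "stab_gen n k U j \<in> carrier_mat (2^n) (2^n)"
  by (simp add: stab_gen_eq)

lemma dim_stab_gen [simp]: "dim_row (stab_gen n k U j) = 2^n" "dim_col (stab_gen n k U j) = 2^n"
  using carrier_matD[OF carrier_stab_gen] by simp_all

lemma length_syndrome [simp]: "length (syndrome n k U A) = n - k"
  by (simp add: syndrome_def)

lemma nth_syndrome:
  "j < n - k \<Longrightarrow> syndrome n k U A ! j \<longleftrightarrow> A * stab_gen n k U j \<noteq> stab_gen n k U j * A"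
  by (simp add: syndrome_def)

lemma stab_gen_square: "stab_gen n k U j * stab_gen n k U j = 1\<^sub>m (2^n)"
  by (simp add: stab_gen_eq conj_mult pauli_mat_square)

lemma pauli_mat_mult_stab_gen:
  assumes F: "length F = n" and j: "j < n - k"
  shows "pauli_mat n F * stab_gen n k U j =
         (if syndrome n k U (pauli_mat n F) ! j then -1 else 1) \<cdot>\<^sub>m (stab_gen n k U j * pauli_mat n F)"
proof -
  let ?g = "stab_gen n k U j" and ?F = "pauli_mat n F"
  obtain c Q where Q: "length Q = n" "?g = c \<cdot>\<^sub>m pauli_mat n Q"
    using conj_pauli_mat[of "Z_string n (k + j)"] by (auto simp: stab_gen_eq)
  obtain \<sigma> :: complex where \<sigma>: "\<sigma> = 1 \<or> \<sigma> = -1" "?F * pauli_mat n Q = \<sigma> \<cdot>\<^sub>m (pauli_mat n Q * ?F)"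
    using pauli_mat_commute_or_anticommute[OF F Q(1)] by blast
  have F_g: "?F * ?g = \<sigma> \<cdot>\<^sub>m (?g * ?F)"
  proof -
    have "?F * ?g = c \<cdot>\<^sub>m (?F * pauli_mat n Q)"
      unfolding Q(2) by (simp add: mult_smult_distrib_n)
    also have "\<dots> = (c * \<sigma>) \<cdot>\<^sub>m (pauli_mat n Q * ?F)"
      unfolding \<sigma>(2) by (simp add: smult_smult_mat)
    also have "\<dots> = \<sigma> \<cdot>\<^sub>m (?g * ?F)"
      unfolding Q(2) by (simp add: mult_smult_assoc_mat_n smult_smult_mat mult.commute)
    finally show ?thesis .
  qed
  have inv: "(?g * ?F) * (?F * ?g) = 1\<^sub>m (2^n)"
    using F by (simp add: assoc_mult_mat_n stab_gen_square)
  have "?F * ?g \<noteq> ?g * ?F" if "\<sigma> = -1"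
  proof
    assume "?F * ?g = ?g * ?F"
    then have "1 \<cdot>\<^sub>m (?g * ?F) = (-1) \<cdot>\<^sub>m (?g * ?F)" using F_g that by (metis one_smult_mat)
    from smult_cancel_right_invertible[OF _ _ inv _ this] show False by simp
  qed
  then show ?thesis using F_g \<sigma>(1) nth_syndrome[OF j] by (metis (full_types) one_smult_mat)
qed

lemma stab_gen_mult_pauli_mat:
  assumes "length F = n" "j < n - k"
  shows "stab_gen n k U j * pauli_mat n F =
         (if syndrome n k U (pauli_mat n F) ! j then -1 else 1) \<cdot>\<^sub>m (pauli_mat n F * stab_gen n k U j)"
  using pauli_mat_mult_stab_gen[OF assms] by (simp add: smult_smult_mat)

text \<open>
  Pauli strings acting as \<open>I\<close> on the \<open>k\<close> logical qubits and as \<open>I\<close> or \<open>Z\<close> on the ancillas;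
  conjugated by \<open>U\<close>, these are exactly the elements of the stabilizer group.
\<close>

definition ancilla_Z_strings :: "pauli1 list set" where
  "ancilla_Z_strings = {D. length D = n \<and> (\<forall>q<k. D!q = PI) \<and> (\<forall>q<n. D!q \<in> {PI, PZ})}"

lemma ancilla_Z_strings_length: "D \<in> ancilla_Z_strings \<Longrightarrow> length D = n"
  by (simp add: ancilla_Z_strings_def)

lemma Z_string_in_ancilla_Z_strings: "j < n - k \<Longrightarrow> Z_string n (k + j) \<in> ancilla_Z_strings"
  by (auto simp: ancilla_Z_strings_def nth_Z_string)

lemma pauli_mat_mult_ancilla_Z_strings:
  assumes "D1 \<in> ancilla_Z_strings" "D2 \<in> ancilla_Z_strings"
  shows "pauli_mat n D1 * pauli_mat n D2 = pauli_mat n (pauli_string_mult D1 D2)"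
    and "pauli_string_mult D1 D2 \<in> ancilla_Z_strings"
proof -
  have len: "length D1 = n" "length D2 = n" using assms by (auto simp: ancilla_Z_strings_def)
  have IZ: "D1!q \<in> {PI, PZ}" "D2!q \<in> {PI, PZ}" if "q < n" for q
    using assms that by (auto simp: ancilla_Z_strings_def)
  have phase: "pauli1_phase (D1!q) (D2!q) = 1"
    and mult: "pauli1_mult (D1!q) (D2!q) \<in> {PI, PZ}" if "q < n" for q
    using IZ[OF that] by auto
  from phase have "pauli_string_phase D1 D2 = 1"
    unfolding pauli_string_phase_def len(1) by (intro prod.neutral) auto
  then show "pauli_mat n D1 * pauli_mat n D2 = pauli_mat n (pauli_string_mult D1 D2)"
    using pauli_mat_mult[OF len] by simp
  show "pauli_string_mult D1 D2 \<in> ancilla_Z_strings"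
    using assms len k_le_n mult by (auto simp: ancilla_Z_strings_def)
qed

lemma ancilla_Z_strings_commute:
  assumes "D1 \<in> ancilla_Z_strings" "D2 \<in> ancilla_Z_strings"
  shows "pauli_mat n D1 * pauli_mat n D2 = pauli_mat n D2 * pauli_mat n D1"
  using pauli_mat_mult_ancilla_Z_strings(1)[OF assms] pauli_mat_mult_ancilla_Z_strings(1)[OF assms(2,1)]
    pauli_string_mult_commute[of D1 D2] assms by (simp add: ancilla_Z_strings_length)

lemma conj_identity: "U * pauli_mat n (replicate n PI) * mat_adjoint U = 1\<^sub>m (2^n)"
  by (simp add: pauli_mat_identity)

lemma replicate_PI_in_ancilla_Z_strings: "replicate n PI \<in> ancilla_Z_strings"
  using k_le_n by (simp add: ancilla_Z_strings_def)

lemma stab_group_imp_ancilla_Z: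
  "g \<in> stab_group n k U \<Longrightarrow> \<exists>D\<in>ancilla_Z_strings. g = U * pauli_mat n D * mat_adjoint U"
proof (induction rule: stab_group.induct)
  case one
  show ?case using replicate_PI_in_ancilla_Z_strings conj_identity by (intro bexI) auto
next
  case (gen j)
  then show ?case using Z_string_in_ancilla_Z_strings stab_gen_eq by blast
next
  case (mult a b)
  then obtain D1 D2 where D: "D1 \<in> ancilla_Z_strings" "D2 \<in> ancilla_Z_strings"
    "a = U * pauli_mat n D1 * mat_adjoint U" "b = U * pauli_mat n D2 * mat_adjoint U" by blast
  then have "a * b = U * pauli_mat n (pauli_string_mult D1 D2) * mat_adjoint U"
    by (simp add: conj_mult pauli_mat_mult_ancilla_Z_strings)
  then show ?case using pauli_mat_mult_ancilla_Z_strings(2)[OF D(1,2)] by blast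
qed

lemma conj_ancilla_Z_in_stab_group:
  assumes "D \<in> ancilla_Z_strings"
  shows "U * pauli_mat n D * mat_adjoint U \<in> stab_group n k U"
proof -
  have "U * pauli_mat n D * mat_adjoint U \<in> stab_group n k U"
    if "D \<in> ancilla_Z_strings" "\<forall>q. k + t \<le> q \<and> q < n \<longrightarrow> D!q = PI" for t D
    using that
  proof (induction t arbitrary: D)
    case 0
    have "D = replicate n PI"
    proof (rule nth_equalityI)
      fix i assume "i < length D"
      then show "D!i = replicate n PI ! i"
        using 0 by (cases "i < k") (auto simp: ancilla_Z_strings_def)
    qed (use 0 in \<open>simp add: ancilla_Z_strings_def\<close>)
    then show ?case using conj_identity stab_group.one by simp
  next
    case (Suc t)
    have IZ: "D!q = PI \<or> D!q = PZ" if "q < n" for q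
      using Suc.prems(1) that by (auto simp: ancilla_Z_strings_def)
    show ?case
    proof (cases "k + t < n \<and> D!(k+t) = PZ")
      case False
      then have "\<forall>q. k + t \<le> q \<and> q < n \<longrightarrow> D!q = PI"
        using Suc.prems(2) IZ by (metis Suc_leI add_Suc_right le_neq_implies_less)
      then show ?thesis using Suc.IH Suc.prems(1) by blast
    next
      case True
      text \<open>Peel off the factor \<open>Z\<^sub>k\<^sub>+\<^sub>t\<close>, i.e. the generator \<open>g\<^sub>t\<close>.\<close>
      define D' where "D' = D[k+t := PI]"
      have len: "length D = n" using Suc.prems by (simp add: ancilla_Z_strings_def)
      have D': "D' \<in> ancilla_Z_strings" "\<forall>q. k + t \<le> q \<and> q < n \<longrightarrow> D'!q = PI"
        using Suc.prems len True by (auto simp: ancilla_Z_strings_def D'_def nth_list_update)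
      have t: "t < n - k" using True by linarith
      have "pauli_string_mult D' (Z_string n (k+t)) = D"
        using len True by (intro nth_equalityI) (auto simp: D'_def nth_Z_string nth_list_update)
      then have "pauli_mat n D = pauli_mat n D' * pauli_mat n (Z_string n (k+t))"
        using pauli_mat_mult_ancilla_Z_strings(1)[OF D'(1) Z_string_in_ancilla_Z_strings[OF t]] by simp
      then have "U * pauli_mat n D * mat_adjoint U = (U * pauli_mat n D' * mat_adjoint U) * stab_gen n k U t"
        by (simp add: conj_mult stab_gen_eq)
      then show ?thesis using Suc.IH[OF D'] stab_group.gen[OF t] by (simp add: stab_group.mult)
    qed
  qed
  moreover have "\<forall>q. k + n \<le> q \<and> q < n \<longrightarrow> D!q = PI" by auto
  ultimately show ?thesis using assms by blast
qed

lemma stab_group_commute_stab_gen: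
  assumes "g \<in> stab_group n k U" "j < n - k"
  shows "g * stab_gen n k U j = stab_gen n k U j * g"
proof -
  obtain D where "D \<in> ancilla_Z_strings" "g = U * pauli_mat n D * mat_adjoint U"
    using stab_group_imp_ancilla_Z[OF assms(1)] by blast
  then show ?thesis
    using ancilla_Z_strings_commute Z_string_in_ancilla_Z_strings[OF assms(2)]
    by (simp add: stab_gen_eq conj_mult)
qed

lemma syndrome_eq_if_smult_mult_stab:
  assumes E: "length E = n" and F: "length F = n" and g: "g \<in> stab_group n k U"
    and eq: "pauli_mat n E = c \<cdot>\<^sub>m (pauli_mat n F * g)"
  shows "syndrome n k U (pauli_mat n E) = syndrome n k U (pauli_mat n F)"
proof (rule nth_equalityI)
  fix j assume "j < length (syndrome n k U (pauli_mat n E))"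
  then have j: "j < n - k" by simp
  let ?gj = "stab_gen n k U j" and ?E = "pauli_mat n E"
  define \<sigma>E :: complex where "\<sigma>E = (if syndrome n k U ?E ! j then -1 else 1)"
  define \<sigma>F :: complex where "\<sigma>F = (if syndrome n k U (pauli_mat n F) ! j then -1 else 1)"
  have g_carrier: "g \<in> carrier_mat (2^n) (2^n)"
    using stab_group_imp_ancilla_Z[OF g] by auto
  have "?E * ?gj = c \<cdot>\<^sub>m (pauli_mat n F * ?gj * g)"
    unfolding eq using stab_group_commute_stab_gen[OF g j] g_carrier
    by (simp add: mult_smult_assoc_mat_n assoc_mult_mat_n)
  also have "\<dots> = \<sigma>F \<cdot>\<^sub>m (?gj * ?E)"
    unfolding eq pauli_mat_mult_stab_gen[OF F j, folded \<sigma>F_def] using g_carrier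
    by (simp add: mult_smult_assoc_mat_n mult_smult_distrib_n assoc_mult_mat_n smult_smult_mat mult.commute)
  finally have "\<sigma>E \<cdot>\<^sub>m (?gj * ?E) = \<sigma>F \<cdot>\<^sub>m (?gj * ?E)"
    using pauli_mat_mult_stab_gen[OF E j] \<sigma>E_def by simp
  moreover have "(?gj * ?E) * (?E * ?gj) = 1\<^sub>m (2^n)"
    using E by (simp add: assoc_mult_mat_n stab_gen_square)
  ultimately have "\<sigma>E = \<sigma>F" using smult_cancel_right_invertible by (metis carrier_stab_gen mult_carrier_mat_n pauli_mat_carrier zero_less_numeral zero_less_power)
  then show "syndrome n k U ?E ! j = syndrome n k U (pauli_mat n F) ! j"
    unfolding \<sigma>E_def \<sigma>F_def by (auto split: if_splits)
qed simp

end

section \<open>The syndrome projector on encoded basis states\<close>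

context stabilizer_code
begin

lemma carrier_synd_proj [simp]: "synd_proj n k U s \<in> carrier_mat (2^n) (2^n)"
proof -
  have "foldr (\<lambda>j M. ((1/2 :: complex) \<cdot>\<^sub>m (1\<^sub>m (2^n) + (if s ! j then -1 else 1) \<cdot>\<^sub>m stab_gen n k U j)) * M)
      js (1\<^sub>m (2^n)) \<in> carrier_mat (2^n) (2^n)" for js
    by (induction js) simp_all
  then show ?thesis unfolding synd_proj_def .
qed

lemma synd_proj_fixes_eigvec:
  assumes w: "w \<in> carrier_vec (2^n)"
    and eig: "\<And>j. j < n - k \<Longrightarrow> stab_gen n k U j *\<^sub>v w = (if s!j then -1 else 1) \<cdot>\<^sub>v w"
  shows "synd_proj n k U s *\<^sub>v w = w"
proof -
  let ?F = "\<lambda>j. (1/2 :: complex) \<cdot>\<^sub>m (1\<^sub>m (2^n) + (if s ! j then -1 else 1) \<cdot>\<^sub>m stab_gen n k U j)"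
  have "foldr (\<lambda>j M. ?F j * M) js (1\<^sub>m (2^n)) \<in> carrier_mat (2^n) (2^n) \<and>
        foldr (\<lambda>j M. ?F j * M) js (1\<^sub>m (2^n)) *\<^sub>v w = w" if "\<forall>j\<in>set js. j < n - k" for js
    using that
  proof (induction js)
    case (Cons j js)
    then have "?F j *\<^sub>v w = w"
      using w eig by (intro eigvec_fixed_by_half_one_plus_smult) auto
    then show ?case using Cons w by auto
  qed (use w in simp)
  then show ?thesis unfolding synd_proj_def by simp
qed

lemma stab_gen_fixes_encoded_basis:
  assumes j: "j < n - k" and y: "y < 2^n" and ancilla: "\<forall>i<n-k. qbit n (k+i) y = 0"
  shows "stab_gen n k U j *\<^sub>v (U *\<^sub>v unit_vec (2^n) y) = U *\<^sub>v unit_vec (2^n) y"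
proof -
  have "Z_on n (k+j) *\<^sub>v unit_vec (2^n) y = unit_vec (2^n) y"
    using j y ancilla by (intro Z_on_mult_unit_vec) auto
  then show ?thesis by (simp add: stab_gen_def Z_on_eq_pauli_mat)
qed

lemma synd_proj_fixes_error_on_encoded_basis:
  assumes E: "length E = n" and y: "y < 2^n" and ancilla: "\<forall>i<n-k. qbit n (k+i) y = 0"
  shows "synd_proj n k U (syndrome n k U (pauli_mat n E)) *\<^sub>v (pauli_mat n E *\<^sub>v (U *\<^sub>v unit_vec (2^n) y))
       = pauli_mat n E *\<^sub>v (U *\<^sub>v unit_vec (2^n) y)"
proof (rule synd_proj_fixes_eigvec)
  fix j assume j: "j < n - k"
  let ?v = "U *\<^sub>v unit_vec (2^n) y" and ?g = "stab_gen n k U j"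
  define \<sigma> :: complex where "\<sigma> = (if syndrome n k U (pauli_mat n E) ! j then -1 else 1)"
  have "?g *\<^sub>v (pauli_mat n E *\<^sub>v ?v) = (?g * pauli_mat n E) *\<^sub>v ?v"
    by simp
  also have "\<dots> = (\<sigma> \<cdot>\<^sub>m (pauli_mat n E * ?g)) *\<^sub>v ?v"
    by (simp only: \<sigma>_def stab_gen_mult_pauli_mat[OF E j])
  also have "\<dots> = \<sigma> \<cdot>\<^sub>v (pauli_mat n E *\<^sub>v (?g *\<^sub>v ?v))"
    by (subst smult_mat_mult_mat_vec) simp_all
  finally show "?g *\<^sub>v (pauli_mat n E *\<^sub>v ?v) = \<sigma> \<cdot>\<^sub>v (pauli_mat n E *\<^sub>v ?v)"
    using stab_gen_fixes_encoded_basis[OF j y ancilla] by simp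
qed simp

text \<open>On encoded basis states \<open>U(|a\<rangle> \<otimes> |0\<rangle>)\<close> the syndrome projector can be dropped.\<close>

lemma index_mult_synd_proj_error:
  assumes E: "length E = n" and A: "A \<in> carrier_mat (2^n) (2^n)"
    and y: "y < 2^n" and ancilla: "\<forall>i<n-k. qbit n (k+i) y = 0" and r: "r < 2^n"
  shows "(A * synd_proj n k U (syndrome n k U (pauli_mat n E)) * (c \<cdot>\<^sub>m pauli_mat n E) * U) $$ (r, y)
       = c * (A * pauli_mat n E * U) $$ (r, y)"
proof -
  let ?e = "unit_vec (2^n) y :: complex vec"
  let ?M = "A * synd_proj n k U (syndrome n k U (pauli_mat n E)) * (c \<cdot>\<^sub>m pauli_mat n E) * U"
  let ?N = "A * pauli_mat n E * U"
  have "?M *\<^sub>v ?e = c \<cdot>\<^sub>v (?N *\<^sub>v ?e)"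
    using A synd_proj_fixes_error_on_encoded_basis[OF E y ancilla]
    by (simp add: smult_mat_mult_mat_vec mult_mat_vec[of _ "2^n" "2^n"])
  then have "col ?M y = c \<cdot>\<^sub>v col ?N y"
    using A y by (simp add: mult_unit_vec_eq_col[of _ "2^n"])
  moreover have "?M $$ (r, y) = col ?M y $ r" "?N $$ (r, y) = col ?N y $ r"
    using carrier_matD[OF A] r y by simp_all
  ultimately show ?thesis
    using carrier_matD[OF A] r by simp
qed

end

section \<open>The trace of \<open>W\<^sub>l\<close>\<close>

text \<open>
  The partial trace over the logical qubits of the \<open>(l, 0)\<close> ancilla block of a Pauli matrix
  that is diagonal on the \<open>m\<close> ancillas.
\<close>

lemma sum_ancilla_block_pauli_mat:
  assumes len: "length P = k + m" and IZ: "\<forall>j<m. P!(k+j) = PI \<or> P!(k+j) = PZ" and l: "l < 2^m"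
  shows "(\<Sum>a<2^k. pauli_mat (k+m) P $$ (a * 2^m + l, a * 2^m))
       = (if l = 0 then \<Prod>q<k. pauli1_trace (P!q) else 0)"
proof -
  define C where "C = (\<Prod>j<m. pauli1_entry (P!(k+j)) (qbit m j l) 0)"
  have C: "C = (if l = 0 then 1 else 0)"
  proof (cases "l = 0")
    case True
    then show ?thesis unfolding C_def using IZ by (auto simp: qbit_def intro!: prod.neutral)
  next
    case False
    then have "\<exists>j<m. qbit m j l \<noteq> qbit m j 0" using qbit_eqI[of l m 0] l by auto
    then obtain j where j: "j < m" "qbit m j l \<noteq> 0" by (auto simp: qbit_def)
    then have "qbit m j l = 1" using qbit_less_2[of m j l] by linarith
    then have "pauli1_entry (P!(k+j)) (qbit m j l) 0 = 0" using IZ j(1) by auto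
    then show ?thesis unfolding C_def using j(1) False by (auto intro!: prod_zero)
  qed
  have entry: "pauli_mat (k+m) P $$ (a * 2^m + l, a * 2^m)
      = (\<Prod>q<k. pauli1_entry (P!q) (qbit k q a) (qbit k q a)) * C" if a: "a < 2^k" for a
  proof -
    have idx: "a * 2^m + l < 2^(k+m)" "a * 2^m + 0 < 2^(k+m)"
      using tensor_index_less[OF a l] tensor_index_less[OF a, of 0 m] by simp_all
    have "pauli_mat (k+m) P $$ (a * 2^m + l, a * 2^m + 0)
        = (\<Prod>q<k+m. pauli1_entry (P ! q) (qbit (k+m) q (a * 2^m + l)) (qbit (k+m) q (a * 2^m + 0)))"
      using idx by (simp only: index_pauli_mat)
    also have "\<dots> = (\<Prod>q<k. pauli1_entry (P ! q) (qbit (k+m) q (a * 2^m + l)) (qbit (k+m) q (a * 2^m + 0)))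
       * (\<Prod>j<m. pauli1_entry (P ! (k+j)) (qbit (k+m) (k+j) (a * 2^m + l)) (qbit (k+m) (k+j) (a * 2^m + 0)))"
      by (rule prod_lessThan_add)
    also have "\<dots> = (\<Prod>q<k. pauli1_entry (P ! q) (qbit k q a) (qbit k q a)) * C"
      unfolding C_def using l
      by (intro arg_cong2[where f = "(*)"] prod.cong)
        (simp_all only: qbit_tensor_index_high qbit_tensor_index_low lessThan_iff pos2 zero_less_power,
         simp add: qbit_def)
    finally show ?thesis by simp
  qed
  have "(\<Sum>a<2^k. pauli_mat (k+m) P $$ (a * 2^m + l, a * 2^m))
      = (\<Sum>a<2^k. \<Prod>q<k. pauli1_entry (P!q) (qbit k q a) (qbit k q a)) * C"
    by (simp add: entry sum_distrib_right)
  also have "\<dots> = (\<Prod>q<k. pauli1_entry (P!q) 0 0 + pauli1_entry (P!q) 1 1) * C"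
    by (simp only: sum_prod_qbit[where f = "\<lambda>q b. pauli1_entry (P!q) b b"])
  finally show ?thesis using C by (simp add: pauli1_trace_def)
qed

context stabilizer_code
begin

lemma correction_error_commute_stab_gen:
  assumes Es: "length Es = n" and E: "length E = n" and j: "j < n - k"
    and syndrome: "syndrome n k U (pauli_mat n Es) = syndrome n k U (pauli_mat n E)"
  shows "(pauli_mat n Es * pauli_mat n E) * stab_gen n k U j = stab_gen n k U j * (pauli_mat n Es * pauli_mat n E)"
proof -
  let ?g = "stab_gen n k U j" and ?E = "pauli_mat n E" and ?Es = "pauli_mat n Es"
  define \<sigma> :: complex where "\<sigma> = (if syndrome n k U ?E ! j then -1 else 1)"
  have Es_g: "?Es * ?g = \<sigma> \<cdot>\<^sub>m (?g * ?Es)" using pauli_mat_mult_stab_gen[OF Es j] syndrome \<sigma>_def by simp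
  have E_g: "?E * ?g = \<sigma> \<cdot>\<^sub>m (?g * ?E)" using pauli_mat_mult_stab_gen[OF E j] \<sigma>_def by simp
  have "(?Es * ?E) * ?g = ?Es * (?E * ?g)" by (simp add: assoc_mult_mat_n)
  also have "\<dots> = \<sigma> \<cdot>\<^sub>m ((?Es * ?g) * ?E)" unfolding E_g by (simp add: mult_smult_distrib_n assoc_mult_mat_n)
  also have "\<dots> = (\<sigma> * \<sigma>) \<cdot>\<^sub>m (?g * (?Es * ?E))"
    unfolding Es_g by (simp add: mult_smult_assoc_mat_n assoc_mult_mat_n smult_smult_mat)
  also have "\<sigma> * \<sigma> = 1" by (simp add: \<sigma>_def)
  finally show ?thesis by simp
qed

lemma ancilla_I_or_Z_if_commute_stab_gens:
  assumes P: "length P = n" and cY: "cY \<noteq> 0"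
    and N: "N \<in> carrier_mat (2^n) (2^n)" "mat_adjoint U * N * U = cY \<cdot>\<^sub>m pauli_mat n P"
    and comm: "\<forall>j<n-k. N * stab_gen n k U j = stab_gen n k U j * N"
  shows "\<forall>j<n-k. P!(k+j) = PI \<or> P!(k+j) = PZ"
proof (intro allI impI)
  fix j assume j: "j < n - k"
  let ?g = "stab_gen n k U j" and ?Z = "pauli_mat n (Z_string n (k+j))"
  have gZ: "mat_adjoint U * ?g * U = ?Z" using conj_inverse(1) by (simp add: stab_gen_eq)
  have "(mat_adjoint U * N * U) * ?Z = mat_adjoint U * (N * ?g) * U"
    unfolding gZ[symmetric] using N(1) by (simp add: conj_mult)
  also have "\<dots> = ?Z * (mat_adjoint U * N * U)"
    unfolding gZ[symmetric] using N(1) comm j by (simp add: conj_mult)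
  finally have "cY \<cdot>\<^sub>m (pauli_mat n P * ?Z) = cY \<cdot>\<^sub>m (?Z * pauli_mat n P)"
    unfolding N(2) by (simp add: mult_smult_assoc_mat_n mult_smult_distrib_n)
  then have "pauli_mat n P * ?Z = ?Z * pauli_mat n P" by (rule smult_mat_cancel[OF cY])
  then show "P!(k+j) = PI \<or> P!(k+j) = PZ"
    using pauli_mat_commute_Z_on[OF P] j k_le_n by (simp add: Z_on_eq_pauli_mat)
qed

lemma adjoint_conj_correction_error:
  assumes Es: "length Es = n" and E: "length E = n"
    and syndrome: "syndrome n k U (pauli_mat n Es) = syndrome n k U (pauli_mat n E)"
  obtains c P where "length P = n" "cmod c = 1" "\<forall>j<n-k. P!(k+j) = PI \<or> P!(k+j) = PZ"
    and "mat_adjoint U * (pauli_mat n Es * pauli_mat n E) * U = c \<cdot>\<^sub>m pauli_mat n P"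
proof -
  have "length (pauli_string_mult Es E) = n" using Es by simp
  then obtain c P where P: "length P = n" "c * c = 1"
    "mat_adjoint U * pauli_mat n (pauli_string_mult Es E) * U = c \<cdot>\<^sub>m pauli_mat n P"
    by (rule adjoint_conj_pauli_mat)
  let ?c = "pauli_string_phase Es E * c"
  have conj: "mat_adjoint U * (pauli_mat n Es * pauli_mat n E) * U = ?c \<cdot>\<^sub>m pauli_mat n P"
    using P(3) by (simp add: pauli_mat_mult[OF Es E] conj_smult smult_smult_mat)
  have "(cmod c)^2 = 1" using P(2) by (metis norm_mult norm_one power2_eq_square)
  then have "cmod ?c = 1" using norm_ge_zero[of c] by (auto simp: norm_mult power2_eq_1_iff)
  moreover have "\<forall>j<n-k. P!(k+j) = PI \<or> P!(k+j) = PZ"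
    using calculation conj correction_error_commute_stab_gen[OF Es E _ syndrome] P(1)
    by (intro ancilla_I_or_Z_if_commute_stab_gens[of P ?c "pauli_mat n Es * pauli_mat n E"]) auto
  ultimately show ?thesis using that P(1) conj by blast
qed

lemma mtrace_W_op:
  fixes E :: "pauli1 list"
  defines "s \<equiv> syndrome n k U (pauli_mat n E)"
  assumes E: "length E = n" and Es: "length (T s) = n" and P: "length P = n"
    and IZ: "\<forall>j<n-k. P!(k+j) = PI \<or> P!(k+j) = PZ"
    and conj: "mat_adjoint U * (pauli_mat n (T s) * pauli_mat n E) * U = c \<cdot>\<^sub>m pauli_mat n P"
    and l: "l < 2^(n-k)"
  shows "mtrace (W_op n k U T p l E s)
       = complex_of_real (sqrt (depol_prob n p E)) * c * (if l = 0 then \<Prod>q<k. pauli1_trace (P!q) else 0)"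
proof -
  obtain m where n: "n = k + m" using k_le_n le_Suc_ex by blast
  define r where "r = complex_of_real (sqrt (depol_prob n p E))"
  have l: "l < 2^m" using l by (simp add: n)
  have entry: "(mat_adjoint U * pauli_mat n (T s) * synd_proj n k U s * (r \<cdot>\<^sub>m pauli_mat n E) * U)
        $$ (a * 2^m + l, a * 2^m) = r * c * pauli_mat n P $$ (a * 2^m + l, a * 2^m)"
    if a: "a < 2^k" for a
  proof -
    have idx: "a * 2^m + l < 2^n" "a * 2^m + 0 < 2^n"
      using tensor_index_less[OF a l] tensor_index_less[OF a, of 0 m] n by simp_all
    have "\<forall>i<n-k. qbit n (k+i) (a * 2^m + 0) = 0"
    proof (intro allI impI)
      fix i assume "i < n - k"
      then have "qbit (k+m) (k+i) (a * 2^m + 0) = qbit m i 0"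
        by (intro qbit_tensor_index_low) (simp_all add: n)
      then show "qbit n (k+i) (a * 2^m + 0) = 0" using n by (simp add: qbit_def)
    qed
    then have "(mat_adjoint U * pauli_mat n (T s) * synd_proj n k U s * (r \<cdot>\<^sub>m pauli_mat n E) * U)
        $$ (a * 2^m + l, a * 2^m) = r * (mat_adjoint U * pauli_mat n (T s) * pauli_mat n E * U) $$ (a * 2^m + l, a * 2^m)"
      using index_mult_synd_proj_error[OF E _ idx(2) _ idx(1)] s_def by simp
    also have "mat_adjoint U * pauli_mat n (T s) * pauli_mat n E * U = c \<cdot>\<^sub>m pauli_mat n P"
      using conj by (simp add: assoc_mult_mat_n)
    finally show ?thesis using idx by simp
  qed
  have "mtrace (W_op n k U T p l E s) = (\<Sum>a<2^k.
      (mat_adjoint U * pauli_mat n (T s) * synd_proj n k U s * (r \<cdot>\<^sub>m pauli_mat n E) * U)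
        $$ (a * 2^m + l, a * 2^m))"
    by (simp add: W_op_def Let_def mtrace_def r_def n)
  also have "\<dots> = (\<Sum>a<2^k. r * c * pauli_mat n P $$ (a * 2^m + l, a * 2^m))"
    by (rule sum.cong) (simp_all add: entry)
  also have "\<dots> = r * c * (\<Sum>a<2^k. pauli_mat (k+m) P $$ (a * 2^m + l, a * 2^m))"
    by (simp add: sum_distrib_left n)
  also have "\<dots> = r * c * (if l = 0 then \<Prod>q<k. pauli1_trace (P!q) else 0)"
    using sum_ancilla_block_pauli_mat[of P k m l] P IZ l by (simp add: n)
  finally show ?thesis by (simp add: r_def)
qed

lemma in_TS_iff_logical_identity:
  fixes E :: "pauli1 list"
  defines "s \<equiv> syndrome n k U (pauli_mat n E)"
  assumes reps: "syndrome_reps n k U T" and E: "length E = n" and P: "length P = n" and c: "c \<noteq> 0"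
    and IZ: "\<forall>j<n-k. P!(k+j) = PI \<or> P!(k+j) = PZ"
    and conj: "mat_adjoint U * (pauli_mat n (T s) * pauli_mat n E) * U = c \<cdot>\<^sub>m pauli_mat n P"
  shows "in_TS n k U T E \<longleftrightarrow> (\<forall>q<k. P!q = PI)"
proof -
  have reps_s: "length (T s') = n" "syndrome n k U (pauli_mat n (T s')) = s'" if "length s' = n - k" for s'
    using reps that by (auto simp: syndrome_reps_def)
  have s: "length s = n - k" by (simp add: s_def)
  let ?E = "pauli_mat n E" and ?Es = "pauli_mat n (T s)"
  define N where "N = ?Es * ?E"
  have N: "N \<in> carrier_mat (2^n) (2^n)" "mat_adjoint U * N * U = c \<cdot>\<^sub>m pauli_mat n P"
    using conj by (simp_all add: N_def)
  have E_eq: "?E = ?Es * N" unfolding N_def using reps_s(1)[OF s] by simp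
  show ?thesis
  proof
    assume logical: "\<forall>q<k. P!q = PI"
    have "P!q \<in> {PI, PZ}" if "q < n" for q
    proof (cases "q < k")
      case False
      then have "P!(k + (q - k)) = PI \<or> P!(k + (q - k)) = PZ" using IZ[rule_format, of "q - k"] that by simp
      then show ?thesis using False by simp
    qed (use logical in simp)
    then have "P \<in> ancilla_Z_strings"
      unfolding ancilla_Z_strings_def using P logical by blast
    then have "U * pauli_mat n P * mat_adjoint U \<in> stab_group n k U"
      by (rule conj_ancilla_Z_in_stab_group)
    moreover have "N = c \<cdot>\<^sub>m (U * pauli_mat n P * mat_adjoint U)"
      using conj_inverse(2)[OF N(1)] N(2) by (simp add: conj_smult)
    ultimately show "in_TS n k U T E"
      unfolding in_TS_def using E_eq s by (auto simp: mult_smult_distrib_n)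
  next
    assume "in_TS n k U T E"
    then obtain s' g c' where s': "length s' = n - k" and g: "g \<in> stab_group n k U"
      and E_g: "?E = c' \<cdot>\<^sub>m (pauli_mat n (T s') * g)" unfolding in_TS_def by blast
    obtain D where D: "D \<in> ancilla_Z_strings" "g = U * pauli_mat n D * mat_adjoint U"
      using stab_group_imp_ancilla_Z[OF g] by blast
    have "s = s'"
      using syndrome_eq_if_smult_mult_stab[OF E reps_s(1)[OF s'] g E_g] reps_s(2)[OF s'] s_def by simp
    then have "N = c' \<cdot>\<^sub>m g"
      unfolding N_def E_g using reps_s(1)[OF s] D by (simp add: mult_smult_distrib_n)
    then have "c \<cdot>\<^sub>m pauli_mat n P = c' \<cdot>\<^sub>m pauli_mat n D"
      using N(2) D conj_inverse(1)[of "pauli_mat n D"] by (simp add: conj_smult)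
    then have "c \<cdot>\<^sub>m pauli_mat n P = c \<cdot>\<^sub>m ((c' / c) \<cdot>\<^sub>m pauli_mat n D)"
      using c by (simp add: smult_smult_mat)
    then have "pauli_mat n P = (c' / c) \<cdot>\<^sub>m pauli_mat n D" by (rule smult_mat_cancel[OF c])
    then have "P = D" using pauli_mat_eq_smult_imp_eq[OF P] D(1) ancilla_Z_strings_length by blast
    then show "\<forall>q<k. P!q = PI" using D(1) by (simp add: ancilla_Z_strings_def)
  qed
qed

end

theorem lemma3:
  fixes n k :: nat and U :: "complex mat" and T :: "bool list \<Rightarrow> pauli1 list"
    and p :: real and E :: "pauli1 list"
  assumes "k \<le> n"
    and "clifford n U"
    and "syndrome_reps n k U T"
    and "0 \<le> p" and "p \<le> 1"
    and "length E = n"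
  shows "(1 / 2 ^ (2 * k)) *
           (\<Sum>l<2 ^ (n - k). (cmod (mtrace (W_op n k U T p l E
               (syndrome n k U (pauli_mat n E)))))\<^sup>2)
         = (if in_TS n k U T E then depol_prob n p E else 0)"
proof -
  interpret stabilizer_code n U k by unfold_locales (use assms in auto)
  define s where "s = syndrome n k U (pauli_mat n E)"
  have Es: "length (T s) = n" "syndrome n k U (pauli_mat n (T s)) = s"
    using assms(3) by (auto simp: syndrome_reps_def s_def)
  obtain c P where P: "length P = n" and c: "cmod c = 1"
    and IZ: "\<forall>j<n-k. P!(k+j) = PI \<or> P!(k+j) = PZ"
    and conj: "mat_adjoint U * (pauli_mat n (T s) * pauli_mat n E) * U = c \<cdot>\<^sub>m pauli_mat n P"
    using adjoint_conj_correction_error[OF Es(1) assms(6)] Es(2) s_def by metis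
  let ?\<Pi> = "\<Prod>q<k. pauli1_trace (P!q)"
  have "(\<Sum>l<2^(n-k). (cmod (mtrace (W_op n k U T p l E s)))\<^sup>2)
      = (\<Sum>l::nat<2^(n-k). if l = 0 then depol_prob n p E * (cmod ?\<Pi>)\<^sup>2 else 0)"
    using mtrace_W_op[OF assms(6) _ P IZ] Es(1) conj c depol_prob_nonneg[OF assms(4,5)]
    by (intro sum.cong) (auto simp: s_def norm_mult power_mult_distrib)
  also have "\<dots> = depol_prob n p E * (cmod ?\<Pi>)\<^sup>2" by simp
  finally have sum: "(\<Sum>l<2^(n-k). (cmod (mtrace (W_op n k U T p l E s)))\<^sup>2)
      = depol_prob n p E * (cmod ?\<Pi>)\<^sup>2" .
  have "in_TS n k U T E \<longleftrightarrow> (\<forall>q<k. P!q = PI)"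
    using c conj s_def by (intro in_TS_iff_logical_identity[OF assms(3,6) P _ IZ]) auto
  with sum show ?thesis
    unfolding s_def norm_prod_pauli1_trace_square by auto
qed

end
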